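(* For all integers $n,k,d\ge1$ such that $k^{1/d}$ is an integer, the function $\textsc{Word}_{S_n,k}$ is computed by an $S_n^{k-1}$-invariant $\Sigma_{d+1}$ formula and by an $S_n^{k-1}$-invariant $\Pi_{d+1}$ formula, each of size $k\,n^{d(k^{1/d}-1)}$.
   Context: $\overline{S_n}$ is the set of $n\times n$ permutation matrices. $\textsc{Word}_{S_n,k}:\overline{S_n}^k\subseteq\{0,1\}^{kn^2}\to\{0,1\}$ maps $(M_1,\dots,M_k)$ to the $(1,1)$-entry of $M_1\cdots M_k$; the variables are $M_{i,a,b}$. $S_n^{k-1}$ acts on variables by $(g_1,\dots,g_{k-1})\cdot M_{i,a,b}=M_{i,g_{i-1}(a),g_i(b)}$ with $g_0=g_k=1$. An $\mathsf{AC}$ formula is a rooted tree with unordered children. Leaves are labeled $0,1,x_i,\neg x_i$, and gates are unbounded fan-in $\textsc{and}$/$\textsc{or}$. A $\Sigma_{d+1}$ (resp. $\Pi_{d+1}$) formula is an $\mathsf{AC}$ formula of depth at most $d+1$ whose output gate is $\textsc{or}$ (resp. $\textsc{and}$). Size is the number of literal leaves. A formula is $P$-invariant if relabeling literals by any $\pi\in P$ yields an isomorphic labeled tree. "Computes" means agreeing with the function on $\overline{S_n}^k$. *)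

theory Defs
  imports "HOL-Library.Multiset" "HOL-Combinatorics.Permutations"
begin

text \<open>AC formulas: rooted trees with unordered children (children form a multiset,
so isomorphism of labelled trees is plain equality).  Leaves are constants 0/1
or literals x_v / not x_v.\<close>
datatype 'v acf =
    CFalse
  | CTrue
  | PosLit 'v
  | NegLit 'v
  | AndG "'v acf multiset"
  | OrG "'v acf multiset"

primrec ac_eval :: "'v acf \<Rightarrow> ('v \<Rightarrow> bool) \<Rightarrow> bool" where
  "ac_eval CFalse x = False"
| "ac_eval CTrue x = True"
| "ac_eval (PosLit v) x = x v"
| "ac_eval (NegLit v) x = (\<not> x v)"
| "ac_eval (AndG M) x = (\<forall>b \<in># image_mset (\<lambda>c. ac_eval c x) M. b)"
| "ac_eval (OrG M) x = (\<exists>b \<in># image_mset (\<lambda>c. ac_eval c x) M. b)"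

primrec ac_depth :: "'v acf \<Rightarrow> nat" where
  "ac_depth CFalse = 0"
| "ac_depth CTrue = 0"
| "ac_depth (PosLit v) = 0"
| "ac_depth (NegLit v) = 0"
| "ac_depth (AndG M) = Suc (Max (insert 0 (set_mset (image_mset ac_depth M))))"
| "ac_depth (OrG M) = Suc (Max (insert 0 (set_mset (image_mset ac_depth M))))"

primrec ac_size :: "'v acf \<Rightarrow> nat" where
  "ac_size CFalse = 0"
| "ac_size CTrue = 0"
| "ac_size (PosLit v) = 1"
| "ac_size (NegLit v) = 1"
| "ac_size (AndG M) = sum_mset (image_mset ac_size M)"
| "ac_size (OrG M) = sum_mset (image_mset ac_size M)"

definition is_Sigma :: "nat \<Rightarrow> 'v acf \<Rightarrow> bool" where
  "is_Sigma d f \<longleftrightarrow> ac_depth f \<le> d \<and> (\<exists>M. f = OrG M)"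

definition is_Pi :: "nat \<Rightarrow> 'v acf \<Rightarrow> bool" where
  "is_Pi d f \<longleftrightarrow> ac_depth f \<le> d \<and> (\<exists>M. f = AndG M)"

text \<open>Variables M_{i,a,b} are encoded 0-based as triples (i,a,b) with i<k, a,b<n.
An assignment x lies in the domain iff each of the k matrices is a permutation matrix.\<close>
type_synonym var = "nat \<times> nat \<times> nat"

definition perm_mat_at :: "nat \<Rightarrow> (var \<Rightarrow> bool) \<Rightarrow> nat \<Rightarrow> bool" where
  "perm_mat_at n x i \<longleftrightarrow>
     (\<forall>a<n. \<exists>!b. b < n \<and> x (i,a,b)) \<and> (\<forall>b<n. \<exists>!a. a < n \<and> x (i,a,b))"

definition perm_tuple :: "nat \<Rightarrow> nat \<Rightarrow> (var \<Rightarrow> bool) \<Rightarrow> bool" where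
  "perm_tuple n k x \<longleftrightarrow> (\<forall>i<k. perm_mat_at n x i)"

primrec prod_entry :: "nat \<Rightarrow> (var \<Rightarrow> bool) \<Rightarrow> nat \<Rightarrow> nat \<Rightarrow> nat \<Rightarrow> nat" where
  "prod_entry n x 0 a b = (if a = b then 1 else 0)"
| "prod_entry n x (Suc j) a b = (\<Sum>c<n. prod_entry n x j a c * (if x (j,c,b) then 1 else 0))"

text \<open>Word_{S_n,k}: the (1,1)-entry (0-based (0,0)) of M_1 ... M_k.\<close>
definition word_fn :: "nat \<Rightarrow> nat \<Rightarrow> (var \<Rightarrow> bool) \<Rightarrow> nat" where
  "word_fn n k x = prod_entry n x k 0 0"

definition computes_word :: "nat \<Rightarrow> nat \<Rightarrow> var acf \<Rightarrow> bool" where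
  "computes_word n k f \<longleftrightarrow>
     set_acf f \<subseteq> {(i,a,b). i < k \<and> a < n \<and> b < n} \<and>
     (\<forall>x. perm_tuple n k x \<longrightarrow> (if ac_eval f x then 1 else 0) = word_fn n k x)"

text \<open>Action of (g_1,...,g_{k-1}) in S_n^{k-1}, with g_0 = g_k = id:
matrix i (0-based) gets its rows permuted by g_i and columns by g_{i+1}.\<close>
definition valid_action :: "nat \<Rightarrow> nat \<Rightarrow> (nat \<Rightarrow> nat \<Rightarrow> nat) \<Rightarrow> bool" where
  "valid_action n k g \<longleftrightarrow> g 0 = id \<and> g k = id \<and> (\<forall>i. 0 < i \<and> i < k \<longrightarrow> g i permutes {..<n})"

definition act_var :: "(nat \<Rightarrow> nat \<Rightarrow> nat) \<Rightarrow> var \<Rightarrow> var" where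
  "act_var g v = (case v of (i,a,b) \<Rightarrow> (i, g i a, g (Suc i) b))"

definition Sn_invariant :: "nat \<Rightarrow> nat \<Rightarrow> var acf \<Rightarrow> bool" where
  "Sn_invariant n k f \<longleftrightarrow> (\<forall>g. valid_action n k g \<longrightarrow> map_acf (act_var g) f = f)"

end

theory Submission
  imports Defs
begin

(*
  On permutation matrices Word is 1 iff the walk from row 0 along the k permutations ends at 0.
  Cut the k = m^d matrices into m blocks of m^(d-1).  The walk crosses all of them from a to b
  iff some tuple of intermediate points p_1, ..., p_(m-1) (one of n^(m-1)) is followed block by
  block: an OR over p of ANDs of block formulas.  As the walk is deterministic, this is also
  equivalent to: for every p, if the first m-1 blocks follow p then the last block ends in b,
  an AND over p of ORs of negated block formulas and one block formula.  Thus Sigma formulas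
  are built from Pi formulas one level down and vice versa; gates of equal type merge, so each
  level adds one to the depth and multiplies the size by m n^(m-1).  The action of S_n^(k-1)
  only relabels the intermediate points, hence permutes the gates.
*)

lemma sum_mset_image_mset_sum:
  "sum_mset (image_mset f (\<Sum>j\<in>A. M j)) = (\<Sum>j\<in>A. sum_mset (image_mset f (M j)))"
  by (induction A rule: infinite_finite_induct) auto

lemma image_mset_sum: "image_mset f (\<Sum>j\<in>A. M j) = (\<Sum>j\<in>A. image_mset f (M j))"
  by (induction A rule: infinite_finite_induct) auto

lemma image_mset_mset_set_reindex:
  assumes "bij_betw \<tau> A A" "\<And>p. p \<in> A \<Longrightarrow> h (F p) = F' (\<tau> p)"
  shows "image_mset h (image_mset F (mset_set A)) = image_mset F' (mset_set A)"
proof (cases "finite A")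
  case True
  have "image_mset h (image_mset F (mset_set A)) = image_mset F' (image_mset \<tau> (mset_set A))"
    unfolding multiset.map_comp using True assms(2) by (intro image_mset_cong) auto
  also have "image_mset \<tau> (mset_set A) = mset_set A"
    using assms(1) by (simp add: image_mset_mset_set bij_betw_def)
  finally show ?thesis .
qed simp

primrec ac_neg :: "'v acf \<Rightarrow> 'v acf" where
  "ac_neg CFalse = CTrue"
| "ac_neg CTrue = CFalse"
| "ac_neg (PosLit v) = NegLit v"
| "ac_neg (NegLit v) = PosLit v"
| "ac_neg (AndG M) = OrG (image_mset ac_neg M)"
| "ac_neg (OrG M) = AndG (image_mset ac_neg M)"

lemma ac_eval_neg [simp]: "ac_eval (ac_neg f) x \<longleftrightarrow> \<not> ac_eval f x"
  by (induction f) auto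

lemma ac_depth_neg [simp]: "ac_depth (ac_neg f) = ac_depth f"
  by (induction f) (simp_all add: image_image cong: image_cong)

lemma ac_size_neg [simp]: "ac_size (ac_neg f) = ac_size f"
  by (induction f) (simp_all add: multiset.map_comp o_def cong: image_mset_cong)

lemma set_acf_neg [simp]: "set_acf (ac_neg f) = set_acf f"
  by (induction f) auto

lemma map_acf_neg: "map_acf h (ac_neg f) = ac_neg (map_acf h f)"
  by (induction f) (auto simp: multiset.map_comp cong: image_mset_cong)

lemma ac_depth_AndG_le: "(\<And>c. c \<in># M \<Longrightarrow> ac_depth c \<le> e) \<Longrightarrow> ac_depth (AndG M) \<le> Suc e"
  by auto

lemma ac_depth_OrG_le: "(\<And>c. c \<in># M \<Longrightarrow> ac_depth c \<le> e) \<Longrightarrow> ac_depth (OrG M) \<le> Suc e"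
  by auto

lemma ac_size_OrG_image: "ac_size (OrG (image_mset F (mset_set A))) = (\<Sum>p\<in>A. ac_size (F p))"
  by (simp add: sum_unfold_sum_mset multiset.map_comp o_def)

lemma ac_size_AndG_image: "ac_size (AndG (image_mset F (mset_set A))) = (\<Sum>p\<in>A. ac_size (F p))"
  by (simp add: sum_unfold_sum_mset multiset.map_comp o_def)

lemma image_mset_ac_size_neg [simp]: "image_mset ac_size (image_mset ac_neg M) = image_mset ac_size M"
  by (simp add: multiset.map_comp o_def)

lemma image_mset_map_acf_neg:
  "image_mset (map_acf h) (image_mset ac_neg M) = image_mset ac_neg (image_mset (map_acf h) M)"
  by (simp add: multiset.map_comp o_def map_acf_neg)

lemma ac_eval_OrG_image:
  "finite A \<Longrightarrow> ac_eval (OrG (image_mset F (mset_set A))) x \<longleftrightarrow> (\<exists>p\<in>A. ac_eval (F p) x)"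
  by simp

lemma ac_eval_AndG_image:
  "finite A \<Longrightarrow> ac_eval (AndG (image_mset F (mset_set A))) x \<longleftrightarrow> (\<forall>p\<in>A. ac_eval (F p) x)"
  by simp

lemma ac_eval_AndG_sum:
  "finite A \<Longrightarrow> ac_eval (AndG (\<Sum>j\<in>A. M j)) x \<longleftrightarrow> (\<forall>j\<in>A. ac_eval (AndG (M j)) x)"
  by (simp add: set_mset_sum)

lemma ac_eval_OrG_sum:
  "finite A \<Longrightarrow> ac_eval (OrG (\<Sum>j\<in>A. M j)) x \<longleftrightarrow> (\<exists>j\<in>A. ac_eval (OrG (M j)) x)"
  by (simp add: set_mset_sum)

lemma ac_eval_OrG_union: "ac_eval (OrG (M + N)) x \<longleftrightarrow> ac_eval (OrG M) x \<or> ac_eval (OrG N) x"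
  by auto

lemma ac_eval_OrG_neg: "ac_eval (OrG (image_mset ac_neg M)) x \<longleftrightarrow> \<not> ac_eval (AndG M) x"
  by simp

definition mat_perm :: "nat \<Rightarrow> (var \<Rightarrow> bool) \<Rightarrow> nat \<Rightarrow> nat \<Rightarrow> nat" where
  "mat_perm n x i a = (THE b. b < n \<and> x (i, a, b))"

primrec mat_walk :: "nat \<Rightarrow> (var \<Rightarrow> bool) \<Rightarrow> nat \<Rightarrow> nat \<Rightarrow> nat \<Rightarrow> nat" where
  "mat_walk n x s 0 a = a"
| "mat_walk n x s (Suc l) a = mat_perm n x (s + l) (mat_walk n x s l a)"

lemma mat_perm_eq_iff:
  assumes "perm_mat_at n x i" "a < n" "b < n"
  shows "x (i, a, b) \<longleftrightarrow> mat_perm n x i a = b"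
proof -
  have ex: "\<exists>!b. b < n \<and> x (i, a, b)"
    using assms unfolding perm_mat_at_def by blast
  show ?thesis
  proof
    assume "x (i, a, b)"
    then show "mat_perm n x i a = b"
      unfolding mat_perm_def using ex assms(3) by (intro the1_equality) auto
  next
    assume "mat_perm n x i a = b"
    then show "x (i, a, b)"
      using theI'[OF ex] unfolding mat_perm_def by blast
  qed
qed

lemma mat_perm_lt:
  assumes "perm_mat_at n x i" "a < n"
  shows "mat_perm n x i a < n"
proof -
  have "\<exists>!b. b < n \<and> x (i, a, b)"
    using assms unfolding perm_mat_at_def by blast
  from theI'[OF this] show ?thesis
    unfolding mat_perm_def by blast
qed

lemma mat_walk_lt: "perm_tuple n k x \<Longrightarrow> s + l \<le> k \<Longrightarrow> a < n \<Longrightarrow> mat_walk n x s l a < n"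
  by (induction l) (auto simp: perm_tuple_def intro: mat_perm_lt)

lemma mat_walk_add: "mat_walk n x s (l + l') a = mat_walk n x (s + l) l' (mat_walk n x s l a)"
  by (induction l') (auto simp: add.assoc)

lemma mat_walk_segment:
  "mat_walk n x (s + j * L) L (mat_walk n x s (j * L) a) = mat_walk n x s (Suc j * L) a"
  by (metis mat_walk_add add.commute mult_Suc)

lemma prod_entry_eq_walk:
  assumes "perm_tuple n k x" "l \<le> k" "a < n" "b < n"
  shows "prod_entry n x l a b = (if mat_walk n x 0 l a = b then 1 else 0)"
  using assms(2,4)
proof (induction l arbitrary: b)
  case 0
  then show ?case by simp
next
  case (Suc l)
  define c where "c = mat_walk n x 0 l a"
  have c: "c < n"
    unfolding c_def using mat_walk_lt[OF assms(1)] Suc.prems assms(3) by simp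
  have "prod_entry n x (Suc l) a b = (\<Sum>c'<n. if c' = c then (if x (l, c', b) then 1 else 0) else 0)"
    unfolding prod_entry.simps using Suc.prems by (intro sum.cong) (simp_all add: Suc.IH c_def)
  also have "\<dots> = (if x (l, c, b) then 1 else 0)"
    using c by simp
  also have "\<dots> = (if mat_walk n x 0 (Suc l) a = b then 1 else 0)"
    using mat_perm_eq_iff[of n x l c b] assms(1) Suc.prems c by (simp add: perm_tuple_def c_def)
  finally show ?case .
qed

lemma word_fn_eq_walk:
  "perm_tuple n k x \<Longrightarrow> 0 < n \<Longrightarrow> word_fn n k x = (if mat_walk n x 0 k 0 = 0 then 1 else 0)"
  unfolding word_fn_def using prod_entry_eq_walk[of n k x k 0 0] by simp

lemma block_end_le: "j < m \<Longrightarrow> s + j * L + L \<le> s + m * (L :: nat)"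
  using mult_le_mono1[of "Suc j" m L] by simp

definition waypoints :: "nat \<Rightarrow> nat \<Rightarrow> (nat \<Rightarrow> nat) set" where
  "waypoints n m = PiE {1..<m} (\<lambda>_. {..<n})"

definition waypoint :: "nat \<Rightarrow> nat \<Rightarrow> nat \<Rightarrow> (nat \<Rightarrow> nat) \<Rightarrow> nat \<Rightarrow> nat" where
  "waypoint m a b p j = (if j = 0 then a else if j = m then b else p j)"

lemma finite_waypoints [simp]: "finite (waypoints n m)"
  unfolding waypoints_def by (simp add: finite_PiE)

lemma card_waypoints: "card (waypoints n m) = n ^ (m - 1)"
  unfolding waypoints_def by (simp add: card_PiE)

lemma waypoint_lt: "p \<in> waypoints n m \<Longrightarrow> a < n \<Longrightarrow> b < n \<Longrightarrow> j \<le> m \<Longrightarrow> waypoint m a b p j < n"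
  unfolding waypoint_def waypoints_def by (auto simp: PiE_def Pi_def)

lemma waypoint_0 [simp]: "waypoint m a b p 0 = a"
  by (simp add: waypoint_def)

lemma waypoint_last [simp]: "0 < m \<Longrightarrow> waypoint m a b p m = b"
  by (simp add: waypoint_def)

lemma chain_eq_mat_walk:
  assumes "\<And>j. j < J \<Longrightarrow> mat_walk n x (s + j * L) L (w j) = w (Suc j)" "j \<le> J"
  shows "w j = mat_walk n x s (j * L) (w 0)"
  using assms(2)
proof (induction j)
  case 0
  then show ?case by simp
next
  case (Suc j)
  then have "w (Suc j) = mat_walk n x (s + j * L) L (mat_walk n x s (j * L) (w 0))"
    using assms(1)[of j] by simp
  then show ?case
    by (simp only: mat_walk_segment)
qed

lemma waypoints_along_walk:
  assumes "perm_tuple n k x" "s + m * L \<le> k" "a < n"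
  obtains p where "p \<in> waypoints n m" "\<And>j. j < m \<Longrightarrow> waypoint m a b p j = mat_walk n x s (j * L) a"
proof
  let ?p = "restrict (\<lambda>j. mat_walk n x s (j * L) a) {1..<m}"
  have "s + j * L \<le> k" if "j < m" for j
    using assms(2) mult_le_mono1[of j m L] that by linarith
  then show "?p \<in> waypoints n m"
    unfolding waypoints_def using mat_walk_lt[OF assms(1)] assms(3) by auto
  show "waypoint m a b ?p j = mat_walk n x s (j * L) a" if "j < m" for j
    using that by (auto simp: waypoint_def)
qed

lemma ex_waypoints_iff_walk:
  assumes "perm_tuple n k x" "s + m * L \<le> k" "a < n" "0 < m"
  shows "(\<exists>p\<in>waypoints n m. \<forall>j<m.
            mat_walk n x (s + j * L) L (waypoint m a b p j) = waypoint m a b p (Suc j))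
    \<longleftrightarrow> mat_walk n x s (m * L) a = b"
    (is "(\<exists>p\<in>waypoints n m. ?chain p) \<longleftrightarrow> _")
proof
  assume "\<exists>p\<in>waypoints n m. ?chain p"
  then obtain p where "?chain p"
    by blast
  from chain_eq_mat_walk[of m, OF _ order_refl, OF this[rule_format]]
  show "mat_walk n x s (m * L) a = b"
    using assms(4) by simp
next
  assume walk_end: "mat_walk n x s (m * L) a = b"
  obtain p where p: "p \<in> waypoints n m" "\<And>j. j < m \<Longrightarrow> waypoint m a b p j = mat_walk n x s (j * L) a"
    using waypoints_along_walk[OF assms(1-3), where b = b] by blast
  have "?chain p"
  proof (intro allI impI)
    fix j assume "j < m"
    then show "mat_walk n x (s + j * L) L (waypoint m a b p j) = waypoint m a b p (Suc j)"
      using p(2) walk_end assms(4) by (cases "Suc j = m") (simp_all add: mat_walk_segment)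
  qed
  with p(1) show "\<exists>p\<in>waypoints n m. ?chain p"
    by blast
qed

lemma all_waypoints_iff_walk:
  assumes "perm_tuple n k x" "s + m * L \<le> k" "a < n" "0 < m"
  shows "(\<forall>p\<in>waypoints n m.
            (\<forall>j<m - 1. mat_walk n x (s + j * L) L (waypoint m a b p j) = waypoint m a b p (Suc j))
            \<longrightarrow> mat_walk n x (s + (m - 1) * L) L (waypoint m a b p (m - 1)) = b)
    \<longleftrightarrow> mat_walk n x s (m * L) a = b"
    (is "(\<forall>p\<in>waypoints n m. ?chain p \<longrightarrow> ?last p) \<longleftrightarrow> _")
proof -
  have m: "Suc (m - 1) * L = m * L"
    using assms(4) by simp
  have last_iff: "?last p \<longleftrightarrow> mat_walk n x s (m * L) a = b"
    if "waypoint m a b p (m - 1) = mat_walk n x s ((m - 1) * L) a" for p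
    using that by (simp only: mat_walk_segment m)
  obtain p where p: "p \<in> waypoints n m" "\<And>j. j < m \<Longrightarrow> waypoint m a b p j = mat_walk n x s (j * L) a"
    using waypoints_along_walk[OF assms(1-3), where b = b] by blast
  have "?chain p"
    using p(2) by (simp add: mat_walk_segment)
  moreover have "waypoint m a b q (m - 1) = mat_walk n x s ((m - 1) * L) a" if "?chain q" for q
    using chain_eq_mat_walk[where w = "waypoint m a b q" and J = "m - 1" and j = "m - 1"] that by simp
  ultimately show ?thesis
    using p last_iff assms(4) by (metis diff_less zero_less_one)
qed

definition relabel_waypoints :: "nat \<Rightarrow> (nat \<Rightarrow> nat \<Rightarrow> nat) \<Rightarrow> (nat \<Rightarrow> nat) \<Rightarrow> nat \<Rightarrow> nat" where
  "relabel_waypoints m \<pi> p = restrict (\<lambda>j. \<pi> j (p j)) {1..<m}"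

lemma bij_betw_relabel_waypoints:
  assumes "\<And>j. 0 < j \<Longrightarrow> j < m \<Longrightarrow> \<pi> j permutes {..<n}"
  shows "bij_betw (relabel_waypoints m \<pi>) (waypoints n m) (waypoints n m)"
proof (rule bij_betw_byWitness)
  let ?\<sigma> = "\<lambda>j. inv (\<pi> j)"
  have inv: "?\<sigma> j permutes {..<n}" if "0 < j" "j < m" for j
    using assms[OF that] by (rule permutes_inv)
  have cancel: "?\<sigma> j (\<pi> j y) = y" "\<pi> j (?\<sigma> j y) = y" if "0 < j" "j < m" for j y
    using permutes_inverses[OF assms[OF that]] by auto
  have into: "\<pi> j y < n" "?\<sigma> j y < n" if "0 < j" "j < m" "y < n" for j y
    using permutes_in_image[OF assms[OF that(1,2)]] permutes_in_image[OF inv[OF that(1,2)]] that(3) by auto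
  show "\<forall>p\<in>waypoints n m. relabel_waypoints m ?\<sigma> (relabel_waypoints m \<pi> p) = p"
    by (auto simp: waypoints_def relabel_waypoints_def cancel fun_eq_iff)
  show "\<forall>p\<in>waypoints n m. relabel_waypoints m \<pi> (relabel_waypoints m ?\<sigma> p) = p"
    by (auto simp: waypoints_def relabel_waypoints_def cancel fun_eq_iff)
  show "relabel_waypoints m \<pi> ` waypoints n m \<subseteq> waypoints n m"
    by (fastforce simp: waypoints_def relabel_waypoints_def PiE_iff intro: into)
  show "relabel_waypoints m ?\<sigma> ` waypoints n m \<subseteq> waypoints n m"
    by (fastforce simp: waypoints_def relabel_waypoints_def PiE_iff intro: into)
qed

lemma waypoint_relabel:
  "0 < m \<Longrightarrow> j \<le> m \<Longrightarrow>
    waypoint m (\<pi> 0 a) (\<pi> m b) (relabel_waypoints m \<pi> p) j = \<pi> j (waypoint m a b p j)"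
  by (auto simp: waypoint_def relabel_waypoints_def)

lemma bij_betw_relabel_block:
  assumes "0 < L" "\<And>i. s < i \<Longrightarrow> i < s + m * L \<Longrightarrow> g i permutes {..<n}"
  shows "bij_betw (relabel_waypoints m (\<lambda>j. g (s + j * L))) (waypoints n m) (waypoints n m)"
proof (rule bij_betw_relabel_waypoints)
  fix j assume "0 < j" "j < m"
  then have "s < s + j * L" "s + j * L < s + m * L"
    using assms(1) by simp_all
  then show "g (s + j * L) permutes {..<n}"
    using assms(2) by blast
qed

(*
  sigma_gates n m e s a b and pi_gates n m e s a b are the children of an OR gate and of an
  AND gate, of depth at most e each, that express that the matrices s, ..., s + m^e - 1 carry
  a to b.  Returning children rather than gates lets an AND of AND gates collapse into one.
*)
fun sigma_gates :: "nat \<Rightarrow> nat \<Rightarrow> nat \<Rightarrow> nat \<Rightarrow> nat \<Rightarrow> nat \<Rightarrow> var acf multiset"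
and pi_gates :: "nat \<Rightarrow> nat \<Rightarrow> nat \<Rightarrow> nat \<Rightarrow> nat \<Rightarrow> nat \<Rightarrow> var acf multiset" where
  "sigma_gates n m 0 s a b = {#PosLit (s, a, b)#}"
| "sigma_gates n m (Suc e) s a b = image_mset (\<lambda>p. AndG
     (\<Sum>j<m. pi_gates n m e (s + j * m ^ e) (waypoint m a b p j) (waypoint m a b p (Suc j))))
     (mset_set (waypoints n m))"
| "pi_gates n m 0 s a b = {#PosLit (s, a, b)#}"
| "pi_gates n m (Suc e) s a b = image_mset (\<lambda>p. OrG
     ((\<Sum>j<m - 1. image_mset ac_neg
         (pi_gates n m e (s + j * m ^ e) (waypoint m a b p j) (waypoint m a b p (Suc j))))
      + sigma_gates n m e (s + (m - 1) * m ^ e) (waypoint m a b p (m - 1)) b))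
     (mset_set (waypoints n m))"

lemma ac_depth_gates:
  "(\<forall>c\<in>#sigma_gates n m e s a b. ac_depth c \<le> e) \<and> (\<forall>c\<in>#pi_gates n m e s a b. ac_depth c \<le> e)"
proof (induction e arbitrary: s a b)
  case (Suc e)
  then show ?case
    by (auto simp: set_mset_sum intro!: ac_depth_AndG_le ac_depth_OrG_le)
qed simp

lemma ac_size_gates:
  assumes "0 < m"
  shows "ac_size (OrG (sigma_gates n m e s a b)) = m ^ e * n ^ (e * (m - 1))
       \<and> ac_size (AndG (pi_gates n m e s a b)) = m ^ e * n ^ (e * (m - 1))"
proof (induction e arbitrary: s a b)
  case (Suc e)
  let ?S = "m ^ e * n ^ (e * (m - 1))"
  have and_gate: "ac_size (AndG (\<Sum>j<m. pi_gates n m e (s + j * m ^ e) (w j) (w (Suc j)))) = m * ?S" for w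
    using Suc.IH by (simp add: sum_mset_image_mset_sum)
  have "(m - 1) * ?S + ?S = m * ?S"
    using assms by (cases m) simp_all
  then have or_gate: "ac_size (OrG ((\<Sum>j<m - 1. image_mset ac_neg (pi_gates n m e (s + j * m ^ e) (w j) (w (Suc j))))
        + sigma_gates n m e (s + (m - 1) * m ^ e) (w (m - 1)) b)) = m * ?S" for w
    using Suc.IH by (simp add: sum_mset_image_mset_sum)
  have "n ^ (m - 1) * (m * ?S) = m ^ Suc e * n ^ (Suc e * (m - 1))"
    by (simp add: power_add mult_ac)
  then show ?case
    unfolding sigma_gates.simps pi_gates.simps ac_size_OrG_image ac_size_AndG_image and_gate or_gate
    by (simp add: card_waypoints)
qed simp

lemma set_acf_gates:
  assumes "0 < m"
  shows "a < n \<Longrightarrow> b < n \<Longrightarrow>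
      (\<forall>c\<in>#sigma_gates n m e s a b. set_acf c \<subseteq> {..<s + m ^ e} \<times> {..<n} \<times> {..<n})
    \<and> (\<forall>c\<in>#pi_gates n m e s a b. set_acf c \<subseteq> {..<s + m ^ e} \<times> {..<n} \<times> {..<n})"
proof (induction e arbitrary: s a b)
  case (Suc e)
  let ?L = "m ^ e"
  let ?B = "{..<s + m * ?L} \<times> {..<n} \<times> {..<n}"
  have sub: "(\<forall>c\<in>#sigma_gates n m e (s + j * ?L) (waypoint m a b p j) (waypoint m a b p (Suc j)). set_acf c \<subseteq> ?B)
      \<and> (\<forall>c\<in>#pi_gates n m e (s + j * ?L) (waypoint m a b p j) (waypoint m a b p (Suc j)). set_acf c \<subseteq> ?B)"
    if "p \<in> waypoints n m" "j < m" for p j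
  proof -
    have "waypoint m a b p j < n" "waypoint m a b p (Suc j) < n"
      using waypoint_lt that Suc.prems by auto
    then show ?thesis
      using Suc.IH[of _ _ "s + j * ?L"] block_end_le[OF that(2), of s ?L] by fastforce
  qed
  from sub[of _ "m - 1"] have last: "\<forall>c\<in>#sigma_gates n m e (s + (m - 1) * ?L) (waypoint m a b p (m - 1)) b. set_acf c \<subseteq> ?B"
    if "p \<in> waypoints n m" for p
    using that assms by simp
  have sigma_part: "\<forall>c\<in>#sigma_gates n m (Suc e) s a b. set_acf c \<subseteq> ?B"
    using sub by (simp add: set_mset_sum UN_subset_iff)
  have "\<forall>c\<in>#pi_gates n m e (s + j * ?L) (waypoint m a b p j) (waypoint m a b p (Suc j)). set_acf c \<subseteq> ?B"
    if "p \<in> waypoints n m" "j < m - 1" for p j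
    using sub[of p j] that by simp
  then have pi_part: "\<forall>c\<in>#pi_gates n m (Suc e) s a b. set_acf c \<subseteq> ?B"
    using last by (simp add: set_mset_sum UN_subset_iff)
  show ?case
    using sigma_part pi_part by simp
qed auto

lemma map_acf_gates:
  assumes "0 < m"
  shows "(\<And>i. s < i \<Longrightarrow> i < s + m ^ e \<Longrightarrow> g i permutes {..<n}) \<Longrightarrow>
      image_mset (map_acf (act_var g)) (sigma_gates n m e s a b) = sigma_gates n m e s (g s a) (g (s + m ^ e) b)
    \<and> image_mset (map_acf (act_var g)) (pi_gates n m e s a b) = pi_gates n m e s (g s a) (g (s + m ^ e) b)"
proof (induction e arbitrary: s a b)
  case 0
  then show ?case by (simp add: act_var_def)
next
  case (Suc e)
  let ?L = "m ^ e"
  let ?h = "map_acf (act_var g)"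
  let ?\<pi> = "\<lambda>j. g (s + j * ?L)"
  let ?\<tau> = "relabel_waypoints m ?\<pi>"
  let ?a = "g s a" and ?b = "g (s + m ^ Suc e) b"
  have bij: "bij_betw ?\<tau> (waypoints n m) (waypoints n m)"
    using bij_betw_relabel_block[where L = "m ^ e" and s = s and g = g] Suc.prems assms by simp
  have wp: "waypoint m ?a ?b (?\<tau> p) j = g (s + j * ?L) (waypoint m a b p j)" if "j \<le> m" for p j
    using waypoint_relabel[OF assms that, of ?\<pi> a b p] by simp
  have seg: "image_mset ?h (sigma_gates n m e (s + j * ?L) (waypoint m a b p j) (waypoint m a b p (Suc j)))
        = sigma_gates n m e (s + j * ?L) (waypoint m ?a ?b (?\<tau> p) j) (waypoint m ?a ?b (?\<tau> p) (Suc j))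
      \<and> image_mset ?h (pi_gates n m e (s + j * ?L) (waypoint m a b p j) (waypoint m a b p (Suc j)))
        = pi_gates n m e (s + j * ?L) (waypoint m ?a ?b (?\<tau> p) j) (waypoint m ?a ?b (?\<tau> p) (Suc j))"
    if "j < m" for p j
  proof -
    have "g i permutes {..<n}" if "s + j * ?L < i" "i < s + j * ?L + ?L" for i
      using Suc.prems that block_end_le[of j m s ?L] \<open>j < m\<close> by simp
    moreover have "s + j * ?L + ?L = s + Suc j * ?L"
      by simp
    ultimately show ?thesis
      using Suc.IH[of "s + j * ?L"] wp[of j] wp[of "Suc j"] that by (simp add: add_ac)
  qed
  have "?h (AndG (\<Sum>j<m. pi_gates n m e (s + j * ?L) (waypoint m a b p j) (waypoint m a b p (Suc j))))
      = AndG (\<Sum>j<m. pi_gates n m e (s + j * ?L) (waypoint m ?a ?b (?\<tau> p) j) (waypoint m ?a ?b (?\<tau> p) (Suc j)))"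
    for p
    using seg by (simp add: image_mset_sum)
  moreover have "?h (OrG ((\<Sum>j<m - 1. image_mset ac_neg
         (pi_gates n m e (s + j * ?L) (waypoint m a b p j) (waypoint m a b p (Suc j))))
      + sigma_gates n m e (s + (m - 1) * ?L) (waypoint m a b p (m - 1)) b))
    = OrG ((\<Sum>j<m - 1. image_mset ac_neg
         (pi_gates n m e (s + j * ?L) (waypoint m ?a ?b (?\<tau> p) j) (waypoint m ?a ?b (?\<tau> p) (Suc j))))
      + sigma_gates n m e (s + (m - 1) * ?L) (waypoint m ?a ?b (?\<tau> p) (m - 1)) ?b)"
    for p
    using seg seg[of "m - 1" p] assms by (simp add: image_mset_sum image_mset_map_acf_neg)
  ultimately show ?case
    by (simp add: image_mset_mset_set_reindex[OF bij])
qed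

lemma ac_eval_gates:
  assumes "perm_tuple n k x" "0 < m"
  shows "s + m ^ e \<le> k \<Longrightarrow> a < n \<Longrightarrow> b < n \<Longrightarrow>
      (ac_eval (OrG (sigma_gates n m e s a b)) x \<longleftrightarrow> mat_walk n x s (m ^ e) a = b)
    \<and> (ac_eval (AndG (pi_gates n m e s a b)) x \<longleftrightarrow> mat_walk n x s (m ^ e) a = b)"
proof (induction e arbitrary: s a b)
  case 0
  then have "perm_mat_at n x s"
    using assms(1) by (simp add: perm_tuple_def)
  then show ?case
    using mat_perm_eq_iff 0 by simp
next
  case (Suc e)
  let ?L = "m ^ e"
  let ?W = "waypoints n m"
  let ?C = "\<lambda>p j. mat_walk n x (s + j * ?L) ?L (waypoint m a b p j) = waypoint m a b p (Suc j)"
  have k: "s + m * ?L \<le> k"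
    using Suc.prems by simp
  have seg: "(ac_eval (OrG (sigma_gates n m e (s + j * ?L) (waypoint m a b p j) (waypoint m a b p (Suc j)))) x \<longleftrightarrow> ?C p j)
      \<and> (ac_eval (AndG (pi_gates n m e (s + j * ?L) (waypoint m a b p j) (waypoint m a b p (Suc j)))) x \<longleftrightarrow> ?C p j)"
    if "p \<in> ?W" "j < m" for p j
  proof -
    have "waypoint m a b p j < n" "waypoint m a b p (Suc j) < n"
      using waypoint_lt that Suc.prems by auto
    moreover have "s + j * ?L + ?L \<le> k"
      using block_end_le[OF that(2), of s ?L] k by simp
    ultimately show ?thesis
      using Suc.IH by blast
  qed
  have "ac_eval (OrG (sigma_gates n m (Suc e) s a b)) x \<longleftrightarrow> (\<exists>p\<in>?W. \<forall>j<m. ?C p j)"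
    unfolding sigma_gates.simps ac_eval_OrG_image[OF finite_waypoints] ac_eval_AndG_sum[OF finite_lessThan]
    using seg by (simp add: Ball_def)
  moreover have "ac_eval (AndG (pi_gates n m (Suc e) s a b)) x \<longleftrightarrow>
      (\<forall>p\<in>?W. (\<forall>j<m - 1. ?C p j) \<longrightarrow> mat_walk n x (s + (m - 1) * ?L) ?L (waypoint m a b p (m - 1)) = b)"
    unfolding pi_gates.simps ac_eval_AndG_image[OF finite_waypoints] ac_eval_OrG_union
      ac_eval_OrG_sum[OF finite_lessThan] ac_eval_OrG_neg
    using seg seg[of _ "m - 1"] assms(2) by (simp add: Ball_def) blast
  ultimately show ?case
    using ex_waypoints_iff_walk[OF assms(1) k Suc.prems(2) assms(2)]
      all_waypoints_iff_walk[OF assms(1) k Suc.prems(2) assms(2)] by simp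
qed

lemma computes_wordI:
  assumes "0 < n" "set_acf f \<subseteq> {..<k} \<times> {..<n} \<times> {..<n}"
    and "\<And>x. perm_tuple n k x \<Longrightarrow> ac_eval f x \<longleftrightarrow> mat_walk n x 0 k 0 = 0"
  shows "computes_word n k f"
  unfolding computes_word_def using assms word_fn_eq_walk by auto

lemma gates_invariant:
  assumes "0 < m" "valid_action n (m ^ e) g"
  shows "image_mset (map_acf (act_var g)) (sigma_gates n m e 0 0 0) = sigma_gates n m e 0 0 0
    \<and> image_mset (map_acf (act_var g)) (pi_gates n m e 0 0 0) = pi_gates n m e 0 0 0"
  using map_acf_gates[OF assms(1), of 0 e g n 0 0] assms(2) by (simp add: valid_action_def)

theorem lemma3p1:
  fixes n k d m :: nat
  assumes "n \<ge> 1" and "k \<ge> 1" and "d \<ge> 1" and "m ^ d = k"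
  shows "(\<exists>f. is_Sigma (d+1) f \<and> Sn_invariant n k f \<and> computes_word n k f
              \<and> ac_size f \<le> k * n ^ (d * (m - 1)))
       \<and> (\<exists>f. is_Pi (d+1) f \<and> Sn_invariant n k f \<and> computes_word n k f
              \<and> ac_size f \<le> k * n ^ (d * (m - 1)))"
proof -
  have m: "0 < m"
    using assms(2-4) by (cases m) (auto simp: zero_power)
  have n: "0 < n"
    using assms(1) by simp
  let ?\<Sigma> = "sigma_gates n m d 0 0 0" and ?\<Pi> = "pi_gates n m d 0 0 0"
  have vars: "set_acf (OrG ?\<Sigma>) \<subseteq> {..<k} \<times> {..<n} \<times> {..<n}" "set_acf (AndG ?\<Pi>) \<subseteq> {..<k} \<times> {..<n} \<times> {..<n}"
    using set_acf_gates[OF m n n, of d 0] assms(4) by auto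
  have eval: "ac_eval (OrG ?\<Sigma>) x \<longleftrightarrow> mat_walk n x 0 k 0 = 0" "ac_eval (AndG ?\<Pi>) x \<longleftrightarrow> mat_walk n x 0 k 0 = 0"
    if "perm_tuple n k x" for x
    using ac_eval_gates[OF that m, of 0 d 0 0] assms(4) n by auto
  have "Sn_invariant n k (OrG ?\<Sigma>)" "Sn_invariant n k (AndG ?\<Pi>)"
    using gates_invariant[OF m] assms(4) by (simp_all add: Sn_invariant_def)
  moreover have "is_Sigma (d + 1) (OrG ?\<Sigma>)" "is_Pi (d + 1) (AndG ?\<Pi>)"
    using ac_depth_gates[of n m d 0 0 0]
    by (auto simp: is_Sigma_def is_Pi_def intro: ac_depth_OrG_le ac_depth_AndG_le)
  moreover have "ac_size (OrG ?\<Sigma>) = k * n ^ (d * (m - 1))" "ac_size (AndG ?\<Pi>) = k * n ^ (d * (m - 1))"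
    using ac_size_gates[OF m, of n d 0 0 0] assms(4) by auto
  moreover have "computes_word n k (OrG ?\<Sigma>)" "computes_word n k (AndG ?\<Pi>)"
    using computes_wordI[OF n] vars eval by blast+
  ultimately show ?thesis
    by (metis order_refl)
qed

end
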